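(* Let $d\ge1$, $m\in\mathbb{N}$ ($m\ge1$), and let $A_0,A_1\in\mathbb{R}^{d\times d}$ be constant matrices with $A_0A_1\ne A_1A_0$. Let $Z:\mathbb{Z}\to\mathbb{R}^{d\times d}$ be the discrete function defined in the context. Then $Z$ is the unique solution of the initial value problem \[ \Delta X(u)=A_0X(u-m)+X(u-m)A_1,\ \ u\in\mathbb{Z}_0^{\infty},\qquad X(u)=I,\ \ u\in\mathbb{Z}_{-m}^{0}. \] In particular, \[ \Delta Z(u)=A_0Z(u-m)+Z(u-m)A_1\qquad\text{for all }u\in\mathbb{Z}_{-m}^{\infty}. \]
   Context: $\Theta$ and $I$ denote the $d\times d$ zero and identity matrices; $\mathbb{Z}_a^b=\{a,a+1,\dots,b\}$ (with $\mathbb{Z}_a^\infty=\{a,a+1,\dots\}$ and $\mathbb{Z}_{-\infty}^b=\{\dots,b-1,b\}$); $\Delta X(u)=X(u+1)-X(u)$. For integers $a$ and $r\ge0$, $\binom{a}{r}=a(a-1)\cdots(a-r+1)/r!$. Define matrices $Q_{r+1}(rm)$, $r=0,1,2,\dots$, by $Q_1(0)=I$ and $Q_{r+1}(rm)=A_0Q_r((r-1)m)+Q_r((r-1)m)A_1$ for $r\ge1$. Define $Z(u)=\Theta$ for $u\in\mathbb{Z}_{-\infty}^{-m-1}$, $Z(u)=I$ for $u\in\mathbb{Z}_{-m}^{0}$, and for each integer $n\ge1$ and $u\in\mathbb{Z}_{(n-1)(m+1)+1}^{n(m+1)}$, \[ Z(u)=\sum_{r=0}^{n}\binom{u-(r-1)m}{r}Q_{r+1}(rm).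 \] *)

theory Defs
  imports "HOL-Analysis.Analysis"
begin

text \<open>d x d real matrices are rendered as real^'d^'d (d = CARD('d) \<ge> 1).
  QQ A0 A1 r denotes the paper's Q_{r+1}(rm).\<close>

fun QQ :: "real^'d^'d \<Rightarrow> real^'d^'d \<Rightarrow> nat \<Rightarrow> real^'d^'d" where
  "QQ A0 A1 0 = mat 1"
| "QQ A0 A1 (Suc r) = A0 ** QQ A0 A1 r + QQ A0 A1 r ** A1"

definition ibinom :: "int \<Rightarrow> nat \<Rightarrow> real" where
  "ibinom a r = (real_of_int a) gchoose r"

text \<open>The discrete function Z. For u \<ge> 1, n is the unique n \<ge> 1 with
  (n-1)(m+1)+1 \<le> u \<le> n(m+1), i.e. n = (u-1) div (m+1) + 1.\<close>
definition ZZ :: "real^'d^'d \<Rightarrow> real^'d^'d \<Rightarrow> nat \<Rightarrow> int \<Rightarrow> real^'d^'d" where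
  "ZZ A0 A1 m u =
     (if u < - int m then 0
      else if u \<le> 0 then mat 1
      else (let n = nat ((u - 1) div (int m + 1) + 1)
            in \<Sum>r\<in>{0..n}. ibinom (u - (int r - 1) * int m) r *\<^sub>R QQ A0 A1 r))"

definition fwd_diff :: "(int \<Rightarrow> 'a::ab_group_add) \<Rightarrow> int \<Rightarrow> 'a" where
  "fwd_diff X u = X (u + 1) - X u"

definition solves_ivp :: "real^'d^'d \<Rightarrow> real^'d^'d \<Rightarrow> nat \<Rightarrow> (int \<Rightarrow> real^'d^'d) \<Rightarrow> bool" where
  "solves_ivp A0 A1 m X \<longleftrightarrow>
     (\<forall>u\<ge>0. fwd_diff X u = A0 ** X (u - int m) + X (u - int m) ** A1) \<and>
     (\<forall>u. - int m \<le> u \<and> u \<le> 0 \<longrightarrow> X u = mat 1)"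

end

theory Submission
  imports Defs
begin

text \<open>Shifting the argument by m turns Z into a function on the naturals: with k = u + m,
  Z(u) is the sum over r of C(k - rm, r) Q_{r+1}(rm), where the terms with r(m+1) > k vanish.
  In this form the delay equation is Pascal's rule C(j+1, r+1) - C(j, r+1) = C(j, r), applied
  termwise together with Q_{r+2}((r+1)m) = A0 Q_{r+1}(rm) + Q_{r+1}(rm) A1. Uniqueness holds
  because the equation determines X(u+1) from X(u) and X(u-m).\<close>

lemma matrix_mult_scaleR_right: "(A::real^'n^'m) ** (c *\<^sub>R (B::real^'p^'n)) = c *\<^sub>R (A ** B)"
  by (simp add: matrix_matrix_mult_def vec_eq_iff sum_distrib_left algebra_simps)

lemma matrix_mult_scaleR_left: "(c *\<^sub>R (A::real^'n^'m)) ** (B::real^'p^'n) = c *\<^sub>R (A ** B)"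
  by (simp add: matrix_matrix_mult_def vec_eq_iff sum_distrib_left algebra_simps)

lemma matrix_add_rdistrib: "((A::'a::semiring_1^'n^'m) + B) ** (C::'a^'p^'n) = A ** C + B ** C"
  by (simp add: matrix_matrix_mult_def vec_eq_iff sum.distrib algebra_simps)

lemma matrix_mult_sum_right:
  "(A::'a::semiring_1^'n^'m) ** (\<Sum>i\<in>S. f i :: 'a^'p^'n) = (\<Sum>i\<in>S. A ** f i)"
  by (induction S rule: infinite_finite_induct) (auto simp: matrix_add_ldistrib)

lemma matrix_mult_sum_left:
  "(\<Sum>i\<in>S. f i :: 'a::semiring_1^'n^'m) ** (B::'a^'p^'n) = (\<Sum>i\<in>S. f i ** B)"
  by (induction S rule: infinite_finite_induct) (auto simp: matrix_add_rdistrib)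

lemma choose_delayed_eq_0:
  assumes "k < r * (m + 1)"
  shows "(k - r * m) choose r = 0"
proof (rule binomial_eq_0)
  show "k - r * m < r"
    using assms by (cases r) (auto simp: algebra_simps)
qed

lemma choose_delayed_Suc_diff:
  "real ((Suc k - Suc s * m) choose Suc s) - real ((k - Suc s * m) choose Suc s)
   = (if m \<le> k then real ((k - m - s * m) choose s) else 0)"
proof (cases "Suc s * m \<le> k")
  case True
  then have "Suc k - Suc s * m = Suc (k - Suc s * m)" "k - m - s * m = k - Suc s * m" "m \<le> k"
    by auto
  then show ?thesis
    by (simp add: binomial_Suc_Suc)
next
  case False
  then have "Suc k - Suc s * m = 0" "k - Suc s * m = 0" "s \<noteq> 0 \<Longrightarrow> k - m - s * m = 0"
    by (auto simp: algebra_simps)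
  then show ?thesis
    using False by (cases "m \<le> k"; cases s) auto
qed

text \<open>This is Z(k - m). The natural-number subtraction k - r m truncates at 0, but only in
  summands that vanish anyway (\<open>choose_delayed_eq_0\<close>).\<close>
definition delayed_binomial_sum :: "real^'d^'d \<Rightarrow> real^'d^'d \<Rightarrow> nat \<Rightarrow> nat \<Rightarrow> real^'d^'d" where
  "delayed_binomial_sum A0 A1 m k = (\<Sum>r\<le>k. real ((k - r * m) choose r) *\<^sub>R QQ A0 A1 r)"

lemma delayed_binomial_sum_atMost:
  assumes "k div (m + 1) \<le> N"
  shows "delayed_binomial_sum A0 A1 m k = (\<Sum>r\<le>N. real ((k - r * m) choose r) *\<^sub>R QQ A0 A1 r)"
proof -
  let ?f = "\<lambda>r. real ((k - r * m) choose r) *\<^sub>R QQ A0 A1 r"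
  have vanish: "?f r = 0" if "k div (m + 1) < r" for r
    using choose_delayed_eq_0[of k r m] that by (simp add: div_less_iff_less_mult)
  have "sum ?f {..max N k} = sum ?f {..N}"
    using assms by (intro sum.mono_neutral_right ballI vanish) auto
  moreover have "sum ?f {..max N k} = sum ?f {..k}"
    by (intro sum.mono_neutral_right ballI vanish) (auto intro: le_less_trans[OF div_le_dividend])
  ultimately show ?thesis
    by (simp add: delayed_binomial_sum_def)
qed

lemma delayed_binomial_sum_Suc:
  "delayed_binomial_sum A0 A1 m (Suc k) - delayed_binomial_sum A0 A1 m k
   = (if m \<le> k then A0 ** delayed_binomial_sum A0 A1 m (k - m)
                     + delayed_binomial_sum A0 A1 m (k - m) ** A1
      else 0)"
proof -
  let ?Q = "QQ A0 A1" and ?W = "delayed_binomial_sum A0 A1 m"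
  have "?W k = (\<Sum>r\<le>Suc k. real ((k - r * m) choose r) *\<^sub>R ?Q r)"
    using div_le_dividend[of k "m + 1"] by (intro delayed_binomial_sum_atMost) linarith
  then have "?W (Suc k) - ?W k =
     (\<Sum>r\<le>Suc k. (real ((Suc k - r * m) choose r) - real ((k - r * m) choose r)) *\<^sub>R ?Q r)"
    by (simp add: delayed_binomial_sum_def[of _ _ _ "Suc k"] sum_subtractf[symmetric] scaleR_diff_left
        del: sum.atMost_Suc)
  also have "\<dots> = (\<Sum>s\<le>k. (real ((Suc k - Suc s * m) choose Suc s)
                             - real ((k - Suc s * m) choose Suc s)) *\<^sub>R ?Q (Suc s))"
    by (subst sum.atMost_Suc_shift) simp
  also have "\<dots> = (\<Sum>s\<le>k. (if m \<le> k then real ((k - m - s * m) choose s) else 0) *\<^sub>R ?Q (Suc s))"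
    by (simp only: choose_delayed_Suc_diff)
  also have "\<dots> = (if m \<le> k then A0 ** ?W (k - m) + ?W (k - m) ** A1 else 0)"
  proof (cases "m \<le> k")
    case True
    have "?W (k - m) = (\<Sum>s\<le>k. real ((k - m - s * m) choose s) *\<^sub>R ?Q s)"
      using div_le_dividend[of "k - m" "m + 1"] by (intro delayed_binomial_sum_atMost) linarith
    then have "A0 ** ?W (k - m) + ?W (k - m) ** A1
       = (\<Sum>s\<le>k. real ((k - m - s * m) choose s) *\<^sub>R ?Q (Suc s))"
      by (simp add: matrix_mult_sum_right matrix_mult_sum_left
          matrix_mult_scaleR_right matrix_mult_scaleR_left sum.distrib[symmetric] scaleR_add_right)
    then show ?thesis
      using True by simp
  qed simp
  finally show ?thesis .
qed

lemma le_div_add_one_iff: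
  fixes r u b :: int
  assumes "b > 0"
  shows "r \<le> (u - 1) div b + 1 \<longleftrightarrow> r * b \<le> u + b - 1"
proof -
  have "r \<le> (u - 1) div b + 1 \<longleftrightarrow> r - 1 \<le> \<lfloor>real_of_int (u - 1) / real_of_int b\<rfloor>"
    by (simp only: floor_divide_of_int_eq) linarith
  also have "\<dots> \<longleftrightarrow> real_of_int ((r - 1) * b) \<le> real_of_int (u - 1)"
    using assms by (simp add: le_floor_iff pos_le_divide_eq)
  also have "\<dots> \<longleftrightarrow> r * b \<le> u + b - 1"
    by (simp only: of_int_le_iff) (simp add: algebra_simps)
  finally show ?thesis .
qed

lemma ZZ_eq_delayed_binomial_sum:
  assumes u: "u \<ge> - int m"
  shows "ZZ A0 A1 m u = delayed_binomial_sum A0 A1 m (nat (u + int m))"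
proof -
  define k where "k = nat (u + int m)"
  show ?thesis
  proof (cases "u \<le> 0")
    case True
    then have "k \<le> m"
      by (simp add: k_def)
    then have "delayed_binomial_sum A0 A1 m k = (\<Sum>r\<le>0. real ((k - r * m) choose r) *\<^sub>R QQ A0 A1 r)"
      by (intro delayed_binomial_sum_atMost) simp
    then show ?thesis
      using True u by (simp add: ZZ_def k_def)
  next
    case False
    define n where "n = nat ((u - 1) div (int m + 1) + 1)"
    have range: "r \<le> n \<longleftrightarrow> r * (m + 1) \<le> k" for r
    proof -
      have "r \<le> n \<longleftrightarrow> int r \<le> (u - 1) div (int m + 1) + 1"
        using False by (simp add: n_def pos_imp_zdiv_nonneg_iff le_nat_iff)
      also have "\<dots> \<longleftrightarrow> int (r * (m + 1)) \<le> int k"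
        using u by (subst le_div_add_one_iff) (simp_all add: k_def algebra_simps)
      finally show ?thesis
        by (simp only: of_nat_le_iff)
    qed
    have "ZZ A0 A1 m u = (\<Sum>r\<in>{0..n}. ibinom (u - (int r - 1) * int m) r *\<^sub>R QQ A0 A1 r)"
      using False u by (simp add: ZZ_def n_def Let_def)
    also have "\<dots> = (\<Sum>r\<le>n. real ((k - r * m) choose r) *\<^sub>R QQ A0 A1 r)"
    proof (rule sum.cong)
      fix r
      assume "r \<in> {..n}"
      then have "r * (m + 1) \<le> k"
        using range by simp
      then have "u - (int r - 1) * int m = int (k - r * m)"
        using u by (simp add: k_def algebra_simps of_nat_diff)
      then show "ibinom (u - (int r - 1) * int m) r *\<^sub>R QQ A0 A1 r
               = real ((k - r * m) choose r) *\<^sub>R QQ A0 A1 r"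
        by (simp add: ibinom_def binomial_gbinomial)
    qed auto
    also have "\<dots> = delayed_binomial_sum A0 A1 m k"
      using range div_times_less_eq_dividend by (intro delayed_binomial_sum_atMost[symmetric]) blast
    finally show ?thesis
      by (simp add: k_def)
  qed
qed

lemma ZZ_fwd_diff:
  assumes u: "u \<ge> - int m"
  shows "fwd_diff (ZZ A0 A1 m) u = A0 ** ZZ A0 A1 m (u - int m) + ZZ A0 A1 m (u - int m) ** A1"
proof -
  define k where "k = nat (u + int m)"
  have "ZZ A0 A1 m (u + 1) = delayed_binomial_sum A0 A1 m (nat (u + 1 + int m))"
    using u by (intro ZZ_eq_delayed_binomial_sum) simp
  moreover have "nat (u + 1 + int m) = Suc k"
    using u by (simp add: k_def)
  moreover have "ZZ A0 A1 m u = delayed_binomial_sum A0 A1 m k"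
    unfolding k_def using u by (rule ZZ_eq_delayed_binomial_sum)
  ultimately have "fwd_diff (ZZ A0 A1 m) u
      = delayed_binomial_sum A0 A1 m (Suc k) - delayed_binomial_sum A0 A1 m k"
    by (simp only: fwd_diff_def)
  moreover have "ZZ A0 A1 m (u - int m) = (if m \<le> k then delayed_binomial_sum A0 A1 m (k - m) else 0)"
  proof (cases "m \<le> k")
    case True
    then have "u \<ge> 0"
      using u by (simp add: k_def le_nat_iff)
    then have "ZZ A0 A1 m (u - int m) = delayed_binomial_sum A0 A1 m (nat (u - int m + int m))"
      by (intro ZZ_eq_delayed_binomial_sum) simp
    moreover have "nat (u - int m + int m) = k - m"
      using \<open>u \<ge> 0\<close> by (simp add: k_def)
    ultimately show ?thesis
      using True by simp
  next
    case False
    then have "u - int m < - int m"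
      by (simp add: k_def)
    then show ?thesis
      using False by (simp add: ZZ_def)
  qed
  ultimately show ?thesis
    by (simp add: delayed_binomial_sum_Suc)
qed

lemma solves_ivp_ZZ: "solves_ivp A0 A1 m (ZZ A0 A1 m)"
  by (simp add: solves_ivp_def ZZ_fwd_diff) (simp add: ZZ_def)

lemma solves_ivp_unique:
  assumes X: "solves_ivp A0 A1 m X" and Y: "solves_ivp A0 A1 m Y" and u: "u \<ge> - int m"
  shows "X u = Y u"
  using u
proof (induction "nat (u + int m)" arbitrary: u rule: less_induct)
  case less
  show ?case
  proof (cases "u \<le> 0")
    case True
    then show ?thesis
      using X Y less.prems by (simp add: solves_ivp_def)
  next
    case False
    have step: "Z u = Z (u - 1) + (A0 ** Z (u - 1 - int m) + Z (u - 1 - int m) ** A1)"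
      if "solves_ivp A0 A1 m Z" for Z
    proof -
      have "fwd_diff Z (u - 1) = A0 ** Z (u - 1 - int m) + Z (u - 1 - int m) ** A1"
        using that False by (simp add: solves_ivp_def)
      then show ?thesis
        by (simp add: fwd_diff_def algebra_simps)
    qed
    have "X (u - 1) = Y (u - 1)" "X (u - 1 - int m) = Y (u - 1 - int m)"
      using False less by (intro less.hyps; linarith)+
    then show ?thesis
      using step[OF X] step[OF Y] by simp
  qed
qed

theorem theorem3:
  fixes A0 A1 :: "real^'d^'d" and m :: nat
  assumes "m \<ge> 1" and "A0 ** A1 \<noteq> A1 ** A0"
  shows "solves_ivp A0 A1 m (ZZ A0 A1 m)
       \<and> (\<forall>X. solves_ivp A0 A1 m X \<longrightarrow> (\<forall>u\<ge>- int m. X u = ZZ A0 A1 m u))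
       \<and> (\<forall>u\<ge>- int m. fwd_diff (ZZ A0 A1 m) u
              = A0 ** ZZ A0 A1 m (u - int m) + ZZ A0 A1 m (u - int m) ** A1)"
proof (intro conjI allI impI)
  show "solves_ivp A0 A1 m (ZZ A0 A1 m)"
    by (rule solves_ivp_ZZ)
next
  fix X and u :: int
  assume X: "solves_ivp A0 A1 m X" and u: "u \<ge> - int m"
  show "X u = ZZ A0 A1 m u"
    using X solves_ivp_ZZ u by (rule solves_ivp_unique)
next
  fix u :: int
  assume "u \<ge> - int m"
  then show "fwd_diff (ZZ A0 A1 m) u = A0 ** ZZ A0 A1 m (u - int m) + ZZ A0 A1 m (u - int m) ** A1"
    by (rule ZZ_fwd_diff)
qed

end
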